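(* Let $n\ge2$, $m,m'\in\mathbb{Z}$ with $m'\neq0$, $\gcd(n,m)=1$ and $\gcd(n,m+m')=1$. Then $$\Delta_{T(n,m+m')}(q)=\frac{1}{[n]_q\,(1-q^{m'})}\,\zeta(q^{m'},\sigma_{n,m};\beta_{n,q})^{-1},$$ where $\zeta(q^{m'},\sigma_{n,m};\beta_{n,q})$ denotes the value of the rational function $\zeta(s,\sigma_{n,m};\beta_{n,q})$ at $s=q^{m'}$, and $\Delta_{T(n,m+m')}(q)=\frac{(1-q)(1-q^{n(m+m')})}{(1-q^n)(1-q^{m+m'})}$ is the representative of the Alexander polynomial of the torus knot $T(n,m+m')$ normalized so that $\operatorname{Res}_{s=1}\zeta(s,\sigma_{n,m+m'};\beta_{n,q})=-[n]_q^{-1}\Delta_{T(n,m+m')}(q)^{-1}$.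
   Context: $\sigma_{n,m}:=(\sigma_1\cdots\sigma_{n-1})^m\in\mathrm{B}_n$, whose closure is the torus knot $T(n,m)$. The Burau representation $\beta_{n,q}$ is given by $\beta_{n,q}(\sigma_i)=I_{i-1}\oplus\begin{pmatrix}1-q&1\\ q&0\end{pmatrix}\oplus I_{n-i-1}$ over $\mathbb{Z}[q^{\pm1}]$, and $\zeta(s,\sigma;\beta_{n,q}):=\det(I_n-\beta_{n,q}(\sigma)s)^{-1}$. $[n]_q=(1-q^n)/(1-q)$. *)

theory Defs
  imports Complex_Main "Jordan_Normal_Form.Determinant"
begin

text \<open>Burau representation beta_{n,q}, evaluated at a complex number q (q nonzero).
  Generators sigma_i, 1 <= i <= n-1; 0-based matrix indices, so the 2x2 block
  sits at rows/columns i-1, i.\<close>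

definition burau_gen :: "nat \<Rightarrow> complex \<Rightarrow> nat \<Rightarrow> complex mat" where
  "burau_gen n q i = mat n n (\<lambda>(r, c).
     if r = i - 1 \<and> c = i - 1 then 1 - q
     else if r = i - 1 \<and> c = i then 1
     else if r = i \<and> c = i - 1 then q
     else if r = i \<and> c = i then 0
     else if r = c then 1 else 0)"

text \<open>Image of sigma_i^{-1}: the inverse of the block [[1-q,1],[q,0]] is [[0,1/q],[1,1-1/q]].\<close>
definition burau_gen_inv :: "nat \<Rightarrow> complex \<Rightarrow> nat \<Rightarrow> complex mat" where
  "burau_gen_inv n q i = mat n n (\<lambda>(r, c).
     if r = i - 1 \<and> c = i - 1 then 0
     else if r = i - 1 \<and> c = i then 1 / q
     else if r = i \<and> c = i - 1 then 1
     else if r = i \<and> c = i then 1 - 1 / q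
     else if r = c then 1 else 0)"

definition mat_list_prod :: "nat \<Rightarrow> complex mat list \<Rightarrow> complex mat" where
  "mat_list_prod n As = foldr (\<lambda>A B. A * B) As (1\<^sub>m n)"

text \<open>beta_{n,q}(sigma_{n,m}) with sigma_{n,m} = (sigma_1 ... sigma_{n-1})^m, m an integer;
  for m < 0 this is (sigma_{n-1}^{-1} ... sigma_1^{-1})^{-m}.\<close>
definition burau_torus :: "nat \<Rightarrow> int \<Rightarrow> complex \<Rightarrow> complex mat" where
  "burau_torus n m q =
     (if m \<ge> 0 then mat_list_prod n (map (burau_gen n q) [1..<n]) ^\<^sub>m nat m
      else mat_list_prod n (map (burau_gen_inv n q) (rev [1..<n])) ^\<^sub>m nat (- m))"

definition burau_zeta :: "nat \<Rightarrow> complex mat \<Rightarrow> complex \<Rightarrow> complex" where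
  "burau_zeta n B s = inverse (det (1\<^sub>m n - s \<cdot>\<^sub>m B))"

definition q_int :: "nat \<Rightarrow> complex \<Rightarrow> complex" where
  "q_int n q = (1 - q ^ n) / (1 - q)"

definition alexander_torus :: "nat \<Rightarrow> int \<Rightarrow> complex \<Rightarrow> complex" where
  "alexander_torus n k q =
     (1 - q) * (1 - q powi (int n * k)) / ((1 - q ^ n) * (1 - q powi k))"

end

theory Submission
  imports Defs "HOL-Number_Theory.Cong"
begin

text \<open>The Burau matrices have all column sums 1, and beta(sigma_1 ... sigma_{n-1}) = q P + x 1^T
  with P the cyclic shift. Matrices l P^k + x 1^T with column sums 1 are closed under
  multiplication, so beta(sigma_{n,m}) = q^m P^m + x 1^T with m coprime to n. Relabelling the
  basis by i \<mapsto> i m conjugates P^m to P, whence det(I - y P^m) = 1 - y^n; and since every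
  column of I - s q^m P^m sums to 1 - s q^m, the rank-one term multiplies this determinant by
  (1 - s)/(1 - s q^m). Thus zeta(s)^-1 = (1 - (s q^m)^n)(1 - s)/(1 - s q^m), and substituting
  s = q^m' gives the Alexander polynomial of T(n, m + m').\<close>

lemma det_conjugate_permutes:
  fixes A :: "'a :: comm_ring_1 mat"
  assumes A: "A \<in> carrier_mat n n" and p: "p permutes {0..<n}"
  shows "det (mat n n (\<lambda>(i,j). A $$ (p i, p j))) = det A"
proof -
  define A1 where "A1 = mat n n (\<lambda>(i,j). A $$ (p i, j))"
  define P where "P = mat n n (\<lambda>(i,j). transpose_mat A1 $$ (p i, j))"
  have A1: "A1 \<in> carrier_mat n n" unfolding A1_def by simp
  have pn: "\<And>i. i < n \<Longrightarrow> p i < n" using p by (meson atLeastLessThan_iff permutes_in_image zero_le)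
  have "mat n n (\<lambda>(i,j). A $$ (p i, p j)) = transpose_mat P"
    by (rule eq_matI, auto simp: P_def A1_def pn)
  then have "det (mat n n (\<lambda>(i,j). A $$ (p i, p j))) = det P"
    using det_transpose[of P n] by (simp add: P_def)
  also have "\<dots> = signof p * det A1"
    unfolding P_def using det_permute_rows[OF _ p, of "transpose_mat A1"] det_transpose[OF A1] A1 by simp
  also have "\<dots> = (signof p * signof p) * det A"
    unfolding A1_def by (simp add: det_permute_rows[OF A p])
  also have "signof p * signof p = (1::'a)" by (cases p rule: sign_cases) auto
  finally show ?thesis by simp
qed

definition cyclic_shift_mat :: "nat \<Rightarrow> nat \<Rightarrow> 'a :: comm_ring_1 mat" where
  "cyclic_shift_mat n k = mat n n (\<lambda>(r,c). if r = (c + k) mod n then 1 else 0)"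

lemma cyclic_shift_mat_dim [simp]:
  "dim_row (cyclic_shift_mat n k) = n" "dim_col (cyclic_shift_mat n k) = n"
  unfolding cyclic_shift_mat_def by simp_all

lemma det_one_minus_cyclic_shift_1:
  fixes y :: "'a :: comm_ring_1"
  assumes n: "n \<ge> 1"
  shows "det (1\<^sub>m n - y \<cdot>\<^sub>m cyclic_shift_mat n 1) = 1 - y ^ n"
proof -
  let ?A = "1\<^sub>m n - y \<cdot>\<^sub>m cyclic_shift_mat n 1"
  define L where "L = mat n n (\<lambda>(r,c). if c \<le> r then y ^ (r - c) else 0)"
  define U where "U = mat n n (\<lambda>(r,c). if c = n - 1 then (if r = n - 1 then 1 else 0) - y ^ (r+1)
     else if r = c then 1 else 0)"
  have L: "L \<in> carrier_mat n n" unfolding L_def by simp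
  have A: "?A \<in> carrier_mat n n" by auto
  \<comment> \<open>Gaussian elimination: the unipotent lower triangular L clears the subdiagonal of ?A,
      leaving all of the cycle in the last column.\<close>
  have LA: "L * ?A = U"
  proof (rule eq_matI)
    fix r c assume "r < dim_row U" and "c < dim_col U"
    hence r: "r < n" and c: "c < n" unfolding U_def by auto
    have "(L * ?A) $$ (r,c) =
       (\<Sum>k<n. (if k = c then L $$ (r,k) else 0) - (if k = (c+1) mod n then y * L $$ (r,k) else 0))"
      using r c unfolding L_def cyclic_shift_mat_def
      by (auto simp: times_mat_def scalar_prod_def algebra_simps intro!: sum.cong)
    also have "\<dots> = L $$ (r,c) - y * L $$ (r, (c+1) mod n)"
      using c n by (simp add: sum_subtractf)
    also have "\<dots> = U $$ (r,c)"
    proof (cases "c = n - 1")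
      case True
      then show ?thesis using r c n unfolding L_def U_def by auto
    next
      case False
      have "\<And>r. c < r \<Longrightarrow> y^(r-c) = y * y^(r - Suc c)" by (metis Suc_diff_Suc power_Suc)
      then show ?thesis using False r c unfolding L_def U_def by auto
    qed
    finally show "(L * ?A) $$ (r,c) = U $$ (r,c)" .
  qed (auto simp: U_def L_def)
  have "det L = prod_list (diag_mat L)"
    by (rule det_lower_triangular[OF _ L]) (auto simp: L_def)
  also have "diag_mat L = replicate n 1"
    by (rule nth_equalityI) (auto simp: diag_mat_def L_def)
  finally have "det L = 1" by simp
  moreover have "det U = 1 - y ^ n"
  proof -
    have "upper_triangular U" unfolding U_def upper_triangular_def by auto
    then have "det U = (\<Prod>i<n. U $$ (i,i))"
      by (subst det_upper_triangular[of _ n]) (auto simp: U_def prod_list_diag_prod lessThan_atLeast0)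
    also have "\<dots> = U $$ (n-1,n-1) * (\<Prod>i<n-1. U $$ (i,i))"
      using n by (cases n) (simp_all add: mult.commute)
    also have "(\<Prod>i<n-1. U $$ (i,i)) = 1" by (rule prod.neutral) (auto simp: U_def)
    finally show ?thesis using n by (simp add: U_def)
  qed
  moreover have "det U = det L * det ?A"
    unfolding LA[symmetric] by (rule det_mult[OF L A])
  ultimately show ?thesis by simp
qed

lemma det_one_minus_cyclic_shift:
  fixes y :: "'a :: comm_ring_1"
  assumes n: "n \<ge> 1" and cop: "coprime k n"
  shows "det (1\<^sub>m n - y \<cdot>\<^sub>m cyclic_shift_mat n k) = 1 - y ^ n"
proof -
  have cancel: "i * k mod n = j * k mod n \<longleftrightarrow> i mod n = j mod n" for i j
    using cong_mult_rcancel_nat[OF cop, of i j] unfolding cong_def .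
  define p where "p = (\<lambda>i. if i < n then (i * k) mod n else i)"
  have pn: "\<And>i. i < n \<Longrightarrow> p i < n" unfolding p_def using n by auto
  have p_eq: "\<And>i j. i < n \<Longrightarrow> j < n \<Longrightarrow> p i = p j \<longleftrightarrow> i = j"
    unfolding p_def using cancel by auto
  have p_shift: "p i = (p j + k) mod n \<longleftrightarrow> i = (j + 1) mod n" if "i < n" "j < n" for i j
  proof -
    have "(p j + k) mod n = ((j+1) * k) mod n" unfolding p_def using that
      by (simp add: mod_add_right_eq algebra_simps)
    then show ?thesis using cancel[of i "j+1"] that unfolding p_def by simp
  qed
  have perm: "p permutes {0..<n}"
    by (rule inj_imp_permutes) (auto simp: inj_on_def p_eq pn, auto simp: p_def)
  have A: "1\<^sub>m n - y \<cdot>\<^sub>m cyclic_shift_mat n k \<in> carrier_mat n n" by auto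
  have "det (1\<^sub>m n - y \<cdot>\<^sub>m cyclic_shift_mat n k)
      = det (mat n n (\<lambda>(i,j). (1\<^sub>m n - y \<cdot>\<^sub>m cyclic_shift_mat n k) $$ (p i, p j)))"
    by (rule det_conjugate_permutes[OF A perm, symmetric])
  also have "mat n n (\<lambda>(i,j). (1\<^sub>m n - y \<cdot>\<^sub>m cyclic_shift_mat n k) $$ (p i, p j))
      = 1\<^sub>m n - y \<cdot>\<^sub>m cyclic_shift_mat n 1"
    by (rule eq_matI) (auto simp: cyclic_shift_mat_def pn p_eq p_shift)
  finally show ?thesis using det_one_minus_cyclic_shift_1[OF n] by simp
qed

lemma det_add_rank_one_const_col_sum:
  fixes A :: "'a :: field mat" and x :: "nat \<Rightarrow> 'a"
  assumes A: "A \<in> carrier_mat n n" and col_sum: "\<And>c. c < n \<Longrightarrow> (\<Sum>r<n. A $$ (r,c)) = a"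
    and a: "a \<noteq> 0"
  shows "det (A + mat n n (\<lambda>(r,c). x r)) = det A * (1 + (\<Sum>r<n. x r) / a)"
proof -
  \<comment> \<open>Bordered matrix K = [[A, x], [-1, 1]]: K R = [[A + x 1^T, x], [0, 1]], and since
      1^T A = a 1^T also Lf K = [[A, x], [0, 1 + 1^T x / a]].\<close>
  define X where "X = mat n n (\<lambda>(r,c). x r)"
  define col where "col = mat n 1 (\<lambda>(r,c). x r)"
  define neg1 where "neg1 = (mat 1 n (\<lambda>_. -1) :: 'a mat)"
  define ones where "ones = (mat 1 n (\<lambda>_. 1) :: 'a mat)"
  define onesa where "onesa = (mat 1 n (\<lambda>_. 1/a) :: 'a mat)"
  define K where "K = four_block_mat A col neg1 (1\<^sub>m 1)"
  define R where "R = four_block_mat (1\<^sub>m n) (0\<^sub>m n 1) ones (1\<^sub>m 1)"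
  define Lf where "Lf = four_block_mat (1\<^sub>m n) (0\<^sub>m n 1) onesa (1\<^sub>m 1)"
  have col: "col \<in> carrier_mat n 1" and neg1: "neg1 \<in> carrier_mat 1 n"
    and ones: "ones \<in> carrier_mat 1 n" and onesa: "onesa \<in> carrier_mat 1 n"
    and X: "X \<in> carrier_mat n n"
    unfolding col_def neg1_def ones_def onesa_def X_def by auto
  have K: "K \<in> carrier_mat (n+1) (n+1)" unfolding K_def using A by auto
  have R: "R \<in> carrier_mat (n+1) (n+1)" unfolding R_def by auto
  have Lf: "Lf \<in> carrier_mat (n+1) (n+1)" unfolding Lf_def by auto
  have "col * ones = X"
    by (rule eq_matI) (auto simp: col_def ones_def X_def times_mat_def scalar_prod_def)
  then have "K * R = four_block_mat (A + X) col (0\<^sub>m 1 n) (1\<^sub>m 1)"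
    unfolding K_def R_def using A col neg1 ones
    by (subst mult_four_block_mat[OF A col neg1 _ _ _ ones])
       (auto intro!: eq_matI simp: neg1_def ones_def)
  then have "det (K * R) = det (A + X)"
    using det_four_block_mat_lower_left_zero[OF add_carrier_mat[OF X, of A] col refl one_carrier_mat] by simp
  moreover have "det R = 1"
    unfolding R_def using det_four_block_mat_upper_right_zero[OF one_carrier_mat refl ones one_carrier_mat] by simp
  ultimately have det_K: "det K = det (A + X)"
    using det_mult[OF K R] by simp
  have "onesa * A + 1\<^sub>m 1 * neg1 = 0\<^sub>m 1 n"
  proof (rule eq_matI)
    fix i j assume "i < dim_row (0\<^sub>m 1 n :: 'a mat)" "j < dim_col (0\<^sub>m 1 n :: 'a mat)"
    hence i: "i = 0" and j: "j < n" by auto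
    have "(onesa * A) $$ (i,j) = (\<Sum>r<n. A $$ (r,j)) / a"
      using A i j by (auto simp: onesa_def times_mat_def scalar_prod_def sum_divide_distrib
          lessThan_atLeast0 intro!: sum.cong)
    also have "\<dots> = 1" using col_sum[OF j] a by simp
    finally show "(onesa * A + 1\<^sub>m 1 * neg1) $$ (i,j) = 0\<^sub>m 1 n $$ (i,j)"
      using i j A neg1 by (simp add: neg1_def)
  qed (use A neg1 onesa in auto)
  moreover have "onesa * col + 1\<^sub>m 1 * 1\<^sub>m 1 = mat 1 1 (\<lambda>_. 1 + (\<Sum>r<n. x r) / a)"
    by (rule eq_matI) (auto simp: onesa_def col_def times_mat_def scalar_prod_def
        sum_divide_distrib lessThan_atLeast0 intro!: sum.cong)
  ultimately have "Lf * K = four_block_mat A col (0\<^sub>m 1 n) (mat 1 1 (\<lambda>_. 1 + (\<Sum>r<n. x r) / a))"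
    unfolding K_def Lf_def using A col neg1
    by (subst mult_four_block_mat[OF _ _ onesa _ A col neg1]) auto
  then have "det (Lf * K) = det A * (1 + (\<Sum>r<n. x r) / a)"
    using det_four_block_mat_lower_left_zero[OF A col refl] by (simp add: det_single)
  moreover have "det Lf = 1"
    unfolding Lf_def using det_four_block_mat_upper_right_zero[OF one_carrier_mat refl onesa one_carrier_mat] by simp
  ultimately show ?thesis
    using det_mult[OF Lf K] det_K unfolding X_def by simp
qed

definition cyclic_rank_one_mat :: "nat \<Rightarrow> 'a \<Rightarrow> nat \<Rightarrow> (nat \<Rightarrow> 'a) \<Rightarrow> 'a :: comm_ring_1 mat" where
  "cyclic_rank_one_mat n l k x = l \<cdot>\<^sub>m cyclic_shift_mat n k + mat n n (\<lambda>(r,c). x r)"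

lemma cyclic_rank_one_mat_dim [simp]:
  "dim_row (cyclic_rank_one_mat n l k x) = n" "dim_col (cyclic_rank_one_mat n l k x) = n"
  unfolding cyclic_rank_one_mat_def by simp_all

lemma cyclic_rank_one_mat_index:
  "r < n \<Longrightarrow> c < n \<Longrightarrow>
   cyclic_rank_one_mat n l k x $$ (r,c) = (if r = (c + k) mod n then l else 0) + x r"
  unfolding cyclic_rank_one_mat_def cyclic_shift_mat_def by simp

lemma det_one_minus_cyclic_rank_one:
  fixes s l :: "'a :: field"
  assumes n: "n \<ge> 1" and cop: "coprime k n" and col_sum: "l + (\<Sum>r<n. x r) = 1"
    and sl: "s * l \<noteq> 1"
  shows "det (1\<^sub>m n - s \<cdot>\<^sub>m cyclic_rank_one_mat n l k x) = (1 - (s*l)^n) * (1 - s) / (1 - s*l)"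
proof -
  define A where "A = 1\<^sub>m n - (s * l) \<cdot>\<^sub>m cyclic_shift_mat n k"
  have A: "A \<in> carrier_mat n n" unfolding A_def by auto
  have "1\<^sub>m n - s \<cdot>\<^sub>m cyclic_rank_one_mat n l k x = A + mat n n (\<lambda>(r,c). - s * x r)"
    by (rule eq_matI) (auto simp: A_def cyclic_rank_one_mat_index cyclic_shift_mat_def algebra_simps)
  moreover have "(\<Sum>r<n. A $$ (r,c)) = 1 - s * l" if c: "c < n" for c
  proof -
    have "(\<Sum>r<n. A $$ (r,c)) = (\<Sum>r<n. (if r = c then 1 else 0) - (if r = (c+k) mod n then s * l else 0))"
      using c by (auto simp: A_def cyclic_shift_mat_def intro!: sum.cong)
    also have "\<dots> = 1 - s * l" using c n by (simp add: sum_subtractf)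
    finally show ?thesis .
  qed
  moreover have "1 - s * l \<noteq> 0" using sl by simp
  ultimately have "det (1\<^sub>m n - s \<cdot>\<^sub>m cyclic_rank_one_mat n l k x)
      = det A * (1 + (\<Sum>r<n. - s * x r) / (1 - s * l))"
    using det_add_rank_one_const_col_sum[OF A] by simp
  also have "det A = 1 - (s * l) ^ n" unfolding A_def by (rule det_one_minus_cyclic_shift[OF n cop])
  also have "(\<Sum>r<n. - s * x r) = - s * (\<Sum>r<n. x r)" by (simp add: sum_distrib_left)
  also have "(\<Sum>r<n. x r) = 1 - l" using col_sum by (simp add: algebra_simps)
  also have "1 + - s * (1 - l) / (1 - s * l) = (1 - s) / (1 - s * l)"
    using sl by (simp add: field_simps)
  finally show ?thesis by simp
qed

lemma cyclic_rank_one_mat_mult: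
  fixes l m :: "'a :: comm_ring_1"
  assumes n: "n \<ge> 1" and col_sum_x: "l + (\<Sum>r<n. x r) = 1" and col_sum_y: "m + (\<Sum>r<n. y r) = 1"
  shows "\<exists>z. cyclic_rank_one_mat n l k x * cyclic_rank_one_mat n m j y = cyclic_rank_one_mat n (l*m) (k+j) z
           \<and> l*m + (\<Sum>r<n. z r) = 1"
proof -
  define z where
    "z r = l * (\<Sum>i<n. if r = (i+k) mod n then y i else 0) + m * x r + x r * (\<Sum>i<n. y i)" for r
  have "cyclic_rank_one_mat n l k x * cyclic_rank_one_mat n m j y = cyclic_rank_one_mat n (l*m) (k+j) z"
  proof (rule eq_matI)
    fix r c assume "r < dim_row (cyclic_rank_one_mat n (l*m) (k+j) z)"
      "c < dim_col (cyclic_rank_one_mat n (l*m) (k+j) z)"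
    hence r: "r < n" and c: "c < n" by auto
    have "(cyclic_rank_one_mat n l k x * cyclic_rank_one_mat n m j y) $$ (r,c) =
      (\<Sum>i<n. ((if r = (i + k) mod n then l else 0) + x r) * ((if i = (c + j) mod n then m else 0) + y i))"
      using r c by (auto simp: times_mat_def scalar_prod_def lessThan_atLeast0 cyclic_rank_one_mat_index
          intro!: sum.cong)
    also have "\<dots> = (\<Sum>i<n. (if i = (c+j) mod n then (if r = (i + k) mod n then l*m else 0) else 0)
        + (if r = (i+k) mod n then l * y i else 0) + (if i = (c+j) mod n then m * x r else 0) + x r * y i)"
      by (rule sum.cong) (auto simp: algebra_simps)
    also have "\<dots> = (if r = ((c+j) mod n + k) mod n then l*m else 0) + z r"
      using n by (simp add: z_def sum.distrib sum_distrib_left if_distrib[of "\<lambda>t. l * t"] cong: if_cong)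
    also have "((c+j) mod n + k) mod n = (c + (k+j)) mod n"
      by (metis mod_add_left_eq add.commute add.left_commute)
    finally show "(cyclic_rank_one_mat n l k x * cyclic_rank_one_mat n m j y) $$ (r,c)
        = cyclic_rank_one_mat n (l*m) (k+j) z $$ (r,c)"
      using r c by (simp add: cyclic_rank_one_mat_index)
  qed auto
  moreover have "l*m + (\<Sum>r<n. z r) = 1"
  proof -
    have shift_sum: "(\<Sum>r<n. \<Sum>i<n. if r = (i+k) mod n then y i else 0) = (\<Sum>i<n. y i)"
      by (subst sum.swap, rule sum.cong) (auto simp: n)
    have "(\<Sum>r<n. z r) = l * (\<Sum>i<n. y i) + m * (\<Sum>r<n. x r) + (\<Sum>r<n. x r) * (\<Sum>i<n. y i)"
      unfolding z_def
      by (simp add: sum.distrib sum_distrib_left[symmetric] sum_distrib_right[symmetric] shift_sum)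
    also have "(\<Sum>i<n. y i) = 1 - m" using col_sum_y by (simp add: algebra_simps)
    also have "(\<Sum>r<n. x r) = 1 - l" using col_sum_x by (simp add: algebra_simps)
    finally show ?thesis by (simp add: algebra_simps)
  qed
  ultimately show ?thesis by blast
qed

lemma cyclic_rank_one_mat_power:
  fixes l :: "'a :: comm_ring_1"
  assumes n: "n \<ge> 1" and col_sum: "l + (\<Sum>r<n. x r) = 1"
  shows "\<exists>z. cyclic_rank_one_mat n l k x ^\<^sub>m p = cyclic_rank_one_mat n (l^p) (k*p) z
           \<and> l^p + (\<Sum>r<n. z r) = 1"
proof (induction p)
  case 0
  have "cyclic_rank_one_mat n l k x ^\<^sub>m 0 = cyclic_rank_one_mat n 1 0 (\<lambda>_. 0)"
    by (auto intro!: eq_matI simp: cyclic_rank_one_mat_index)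
  then show ?case by auto
next
  case (Suc p)
  then obtain z where z: "cyclic_rank_one_mat n l k x ^\<^sub>m p = cyclic_rank_one_mat n (l^p) (k*p) z"
      "l^p + (\<Sum>r<n. z r) = 1"
    by auto
  obtain w where "cyclic_rank_one_mat n (l^p) (k*p) z * cyclic_rank_one_mat n l k x
      = cyclic_rank_one_mat n (l^p * l) (k*p + k) w" "l^p * l + (\<Sum>r<n. w r) = 1"
    using cyclic_rank_one_mat_mult[OF n z(2) col_sum] by blast
  with z(1) show ?case by (auto simp: ac_simps)
qed

lemma mat_list_prod_Nil [simp]: "mat_list_prod n [] = 1\<^sub>m n"
  unfolding mat_list_prod_def by simp

lemma mat_list_prod_Cons [simp]: "mat_list_prod n (A # As) = A * mat_list_prod n As"
  unfolding mat_list_prod_def by simp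

lemma burau_gen_mult_index:
  assumes i: "1 \<le> i" "i < n" and M: "M \<in> carrier_mat n n" and r: "r < n" and c: "c < n"
  shows "(burau_gen n q i * M) $$ (r,c) =
    (if r = i - 1 then (1-q) * M $$ (i-1,c) + M $$ (i,c)
     else if r = i then q * M $$ (i-1,c) else M $$ (r,c))"
proof -
  have "(burau_gen n q i * M) $$ (r,c) = (\<Sum>k<n. burau_gen n q i $$ (r,k) * M $$ (k,c))"
    using M r c by (auto simp: burau_gen_def times_mat_def scalar_prod_def lessThan_atLeast0
        intro!: sum.cong)
  also have "\<dots> = (\<Sum>k<n. (if r = i - 1 then (if k = i - 1 then (1-q) * M $$ (k,c) else 0)
        + (if k = i then M $$ (k,c) else 0)
      else if r = i then (if k = i - 1 then q * M $$ (k,c) else 0)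
      else if k = r then M $$ (k,c) else 0))"
    using i r by (intro sum.cong) (auto simp: burau_gen_def)
  finally show ?thesis using i r by (auto simp: sum.distrib)
qed

lemma burau_gen_inv_mult_index:
  assumes i: "1 \<le> i" "i < n" and M: "M \<in> carrier_mat n n" and r: "r < n" and c: "c < n"
  shows "(burau_gen_inv n q i * M) $$ (r,c) =
    (if r = i - 1 then (1/q) * M $$ (i,c)
     else if r = i then M $$ (i-1,c) + (1 - 1/q) * M $$ (i,c) else M $$ (r,c))"
proof -
  have "(burau_gen_inv n q i * M) $$ (r,c) = (\<Sum>k<n. burau_gen_inv n q i $$ (r,k) * M $$ (k,c))"
    using M r c by (auto simp: burau_gen_inv_def times_mat_def scalar_prod_def lessThan_atLeast0
        intro!: sum.cong)
  also have "\<dots> = (\<Sum>k<n. (if r = i - 1 then (if k = i then (1/q) * M $$ (k,c) else 0)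
      else if r = i then (if k = i - 1 then M $$ (k,c) else 0)
        + (if k = i then (1 - 1/q) * M $$ (k,c) else 0)
      else if k = r then M $$ (k,c) else 0))"
    using i r by (intro sum.cong) (auto simp: burau_gen_inv_def)
  finally show ?thesis using i r by (auto simp: sum.distrib)
qed

definition burau_gens_from_mat :: "nat \<Rightarrow> complex \<Rightarrow> nat \<Rightarrow> complex mat" where
  "burau_gens_from_mat n q j = mat n n (\<lambda>(r,c). if j - 1 \<le> r \<and> j - 1 \<le> c then
      (if r = j - 1 then (if c = n - 1 then 1 else 1 - q) else (if c = r - 1 then q else 0))
      else (if r = c then 1 else 0))"

lemma mat_list_prod_burau_gens_from:
  assumes "1 \<le> j" "j \<le> n"
  shows "mat_list_prod n (map (burau_gen n q) [j..<n]) = burau_gens_from_mat n q j"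
  using assms
proof (induction "n - j" arbitrary: j)
  case 0
  then have "j = n" by simp
  then show ?case by (auto intro!: eq_matI simp: burau_gens_from_mat_def)
next
  case (Suc d)
  then have j: "1 \<le> j" "j < n" by auto
  let ?S = "burau_gens_from_mat n q (Suc j)"
  have "mat_list_prod n (map (burau_gen n q) [j..<n]) = burau_gen n q j * ?S"
    using Suc j by (simp add: upt_conv_Cons)
  also have "\<dots> = burau_gens_from_mat n q j"
  proof (rule eq_matI)
    fix r c assume "r < dim_row (burau_gens_from_mat n q j)" "c < dim_col (burau_gens_from_mat n q j)"
    then have r: "r < n" and c: "c < n" by (auto simp: burau_gens_from_mat_def)
    have prod: "(burau_gen n q j * ?S) $$ (r,c) = (if r = j - 1 then (1-q) * ?S $$ (j-1,c) + ?S $$ (j,c)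
        else if r = j then q * ?S $$ (j-1,c) else ?S $$ (r,c))"
      by (rule burau_gen_mult_index[OF j _ r c]) (simp add: burau_gens_from_mat_def)
    have row_j1: "?S $$ (j-1,c) = (if c = j - 1 then 1 else 0)"
      using j c by (simp add: burau_gens_from_mat_def)
    have row_j: "?S $$ (j,c) = (if j \<le> c then (if c = n - 1 then 1 else 1 - q) else 0)"
      using j c by (simp add: burau_gens_from_mat_def)
    consider "r < j - 1" | "r = j - 1" | "r = j" | "r > j" by linarith
    then show "(burau_gen n q j * ?S) $$ (r,c) = burau_gens_from_mat n q j $$ (r,c)"
      by cases (unfold prod row_j1 row_j, use r c j in \<open>auto simp: burau_gens_from_mat_def\<close>)+
  qed (auto simp: burau_gens_from_mat_def burau_gen_def)
  finally show ?case .
qed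

definition burau_inv_gens_upto_mat :: "nat \<Rightarrow> complex \<Rightarrow> nat \<Rightarrow> complex mat" where
  "burau_inv_gens_upto_mat n q j = mat n n (\<lambda>(r,c). if r \<le> j \<and> c \<le> j then
      (if r = j then (if c = 0 then 1 else 1 - 1/q) else (if c = r + 1 then 1/q else 0))
      else (if r = c then 1 else 0))"

lemma mat_list_prod_burau_inv_gens_upto:
  assumes "j < n"
  shows "mat_list_prod n (map (burau_gen_inv n q) (rev [1..<Suc j])) = burau_inv_gens_upto_mat n q j"
  using assms
proof (induction j)
  case 0
  show ?case by (auto intro!: eq_matI simp: burau_inv_gens_upto_mat_def)
next
  case (Suc j)
  then have j: "1 \<le> Suc j" "Suc j < n" by auto
  let ?C = "burau_inv_gens_upto_mat n q j"
  have "mat_list_prod n (map (burau_gen_inv n q) (rev [1..<Suc (Suc j)]))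
      = burau_gen_inv n q (Suc j) * ?C"
    using Suc by simp
  also have "\<dots> = burau_inv_gens_upto_mat n q (Suc j)"
  proof (rule eq_matI)
    fix r c assume "r < dim_row (burau_inv_gens_upto_mat n q (Suc j))"
      "c < dim_col (burau_inv_gens_upto_mat n q (Suc j))"
    then have r: "r < n" and c: "c < n" by (auto simp: burau_inv_gens_upto_mat_def)
    have prod: "(burau_gen_inv n q (Suc j) * ?C) $$ (r,c) = (if r = j then (1/q) * ?C $$ (Suc j,c)
        else if r = Suc j then ?C $$ (j,c) + (1 - 1/q) * ?C $$ (Suc j,c) else ?C $$ (r,c))"
      using burau_gen_inv_mult_index[OF j _ r c, of ?C q] by (simp add: burau_inv_gens_upto_mat_def)
    have row_Suc_j: "?C $$ (Suc j,c) = (if c = Suc j then 1 else 0)"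
      using j c by (simp add: burau_inv_gens_upto_mat_def)
    have row_j: "?C $$ (j,c) = (if c \<le> j then (if c = 0 then 1 else 1 - 1/q) else 0)"
      using j c by (simp add: burau_inv_gens_upto_mat_def)
    consider "r < j" | "r = j" | "r = Suc j" | "r > Suc j" by linarith
    then show "(burau_gen_inv n q (Suc j) * ?C) $$ (r,c) = burau_inv_gens_upto_mat n q (Suc j) $$ (r,c)"
      by cases (unfold prod row_Suc_j row_j, use r c j in \<open>auto simp: burau_inv_gens_upto_mat_def\<close>)+
  qed (auto simp: burau_inv_gens_upto_mat_def burau_gen_inv_def)
  finally show ?case .
qed

lemma burau_gens_prod_cyclic_rank_one:
  assumes n: "n \<ge> 2"
  shows "mat_list_prod n (map (burau_gen n q) [1..<n])
       = cyclic_rank_one_mat n q 1 (\<lambda>r. if r = 0 then 1 - q else 0)"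
proof -
  have "mat_list_prod n (map (burau_gen n q) [1..<n]) = burau_gens_from_mat n q 1"
    using n by (intro mat_list_prod_burau_gens_from) auto
  also have "\<dots> = cyclic_rank_one_mat n q 1 (\<lambda>r. if r = 0 then 1 - q else 0)"
  proof (rule eq_matI)
    fix r c assume "r < dim_row (cyclic_rank_one_mat n q 1 (\<lambda>r. if r = 0 then 1 - q else 0))"
      "c < dim_col (cyclic_rank_one_mat n q 1 (\<lambda>r. if r = 0 then 1 - q else 0))"
    then have r: "r < n" and c: "c < n" by auto
    have shift: "(c + 1) mod n = (if c = n - 1 then 0 else c + 1)" using c n by auto
    show "burau_gens_from_mat n q 1 $$ (r,c)
        = cyclic_rank_one_mat n q 1 (\<lambda>r. if r = 0 then 1 - q else 0) $$ (r,c)"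
      unfolding cyclic_rank_one_mat_index[OF r c] shift
      using r c n by (auto simp: burau_gens_from_mat_def)
  qed (auto simp: burau_gens_from_mat_def)
  finally show ?thesis .
qed

lemma burau_inv_gens_prod_cyclic_rank_one:
  assumes n: "n \<ge> 2"
  shows "mat_list_prod n (map (burau_gen_inv n q) (rev [1..<n]))
       = cyclic_rank_one_mat n (1/q) (n-1) (\<lambda>r. if r = n - 1 then 1 - 1/q else 0)"
proof -
  have "mat_list_prod n (map (burau_gen_inv n q) (rev [1..<n])) = burau_inv_gens_upto_mat n q (n-1)"
    using n mat_list_prod_burau_inv_gens_upto[of "n-1" n q] by simp
  also have "\<dots> = cyclic_rank_one_mat n (1/q) (n-1) (\<lambda>r. if r = n - 1 then 1 - 1/q else 0)"
  proof (rule eq_matI)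
    fix r c assume "r < dim_row (cyclic_rank_one_mat n (1/q) (n-1) (\<lambda>r. if r = n - 1 then 1 - 1/q else 0))"
      "c < dim_col (cyclic_rank_one_mat n (1/q) (n-1) (\<lambda>r. if r = n - 1 then 1 - 1/q else 0))"
    then have r: "r < n" and c: "c < n" by auto
    have shift: "(c + (n - 1)) mod n = (if c = 0 then n - 1 else c - 1)"
    proof (cases "c = 0")
      case False
      then have "c + (n - 1) = (c - 1) + n" using n by simp
      then have "(c + (n - 1)) mod n = (c - 1) mod n" by simp
      then show ?thesis using False c by simp
    qed (use n in simp)
    show "burau_inv_gens_upto_mat n q (n-1) $$ (r,c)
        = cyclic_rank_one_mat n (1/q) (n-1) (\<lambda>r. if r = n - 1 then 1 - 1/q else 0) $$ (r,c)"
      unfolding cyclic_rank_one_mat_index[OF r c] shift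
      using r c n by (auto simp: burau_inv_gens_upto_mat_def)
  qed (auto simp: burau_inv_gens_upto_mat_def)
  finally show ?thesis .
qed

lemma burau_torus_cyclic_rank_one:
  assumes n: "n \<ge> 2" and coprime: "gcd (int n) m = 1"
  shows "\<exists>k x. burau_torus n m q = cyclic_rank_one_mat n (q powi m) k x
           \<and> q powi m + (\<Sum>r<n. x r) = 1 \<and> coprime k n"
proof (cases "m \<ge> 0")
  case True
  have col_sum: "q + (\<Sum>r<n. if r = 0 then 1 - q else 0) = 1" using n by simp
  obtain x where pow: "cyclic_rank_one_mat n q 1 (\<lambda>r. if r = 0 then 1 - q else 0) ^\<^sub>m nat m
      = cyclic_rank_one_mat n (q ^ nat m) (1 * nat m) x" and x: "q ^ nat m + (\<Sum>r<n. x r) = 1"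
    using cyclic_rank_one_mat_power[OF _ col_sum, of 1 "nat m"] n by auto
  have "burau_torus n m q = cyclic_rank_one_mat n (q powi m) (nat m) x"
    using True pow burau_gens_prod_cyclic_rank_one[OF n, of q]
    by (simp add: burau_torus_def power_int_def)
  moreover have "q powi m + (\<Sum>r<n. x r) = 1" using True x by (simp add: power_int_def)
  moreover have "coprime (nat m) n"
    using coprime True coprime_int_iff[of "nat m" n]
    by (simp add: coprime_iff_gcd_eq_1 [symmetric] coprime_commute)
  ultimately show ?thesis by blast
next
  case False
  have col_sum: "1/q + (\<Sum>r<n. if r = n - 1 then 1 - 1/q else 0) = 1" using n by simp
  obtain x where
    pow: "cyclic_rank_one_mat n (1/q) (n-1) (\<lambda>r. if r = n - 1 then 1 - 1/q else 0) ^\<^sub>m nat (-m)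
      = cyclic_rank_one_mat n ((1/q) ^ nat (-m)) ((n-1) * nat (-m)) x"
    and x: "(1/q) ^ nat (-m) + (\<Sum>r<n. x r) = 1"
    using cyclic_rank_one_mat_power[OF _ col_sum, of "n-1" "nat (-m)"] n by auto
  have "burau_torus n m q = cyclic_rank_one_mat n (q powi m) ((n-1) * nat (-m)) x"
    using False pow burau_inv_gens_prod_cyclic_rank_one[OF n, of q]
    by (simp add: burau_torus_def power_int_def inverse_eq_divide)
  moreover have "q powi m + (\<Sum>r<n. x r) = 1"
    using False x by (simp add: power_int_def inverse_eq_divide)
  moreover have "coprime ((n-1) * nat (-m)) n"
  proof -
    have "coprime (nat (-m)) n"
      using coprime False coprime_int_iff[of "nat (-m)" n]
      by (simp add: coprime_iff_gcd_eq_1 [symmetric] coprime_commute)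
    moreover have "coprime (n-1) n" using n coprime_diff_one_left_nat[of n] by linarith
    ultimately show ?thesis by simp
  qed
  ultimately show ?thesis by blast
qed

lemma det_one_minus_burau_torus:
  assumes n: "n \<ge> 2" and coprime: "gcd (int n) m = 1" and s: "s * q powi m \<noteq> 1"
  shows "det (1\<^sub>m n - s \<cdot>\<^sub>m burau_torus n m q)
       = (1 - (s * q powi m) ^ n) * (1 - s) / (1 - s * q powi m)"
proof -
  obtain k x where "burau_torus n m q = cyclic_rank_one_mat n (q powi m) k x"
    and "q powi m + (\<Sum>r<n. x r) = 1" and "coprime k n"
    using burau_torus_cyclic_rank_one[OF n coprime] by blast
  with n s show ?thesis by (simp add: det_one_minus_cyclic_rank_one)
qed

lemma power_int_neq_1:
  fixes q :: "'a :: field"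
  assumes no_root_of_unity: "\<forall>k::nat. k > 0 \<longrightarrow> q ^ k \<noteq> 1" and z: "z \<noteq> 0"
  shows "q powi z \<noteq> 1"
proof (cases "z > 0")
  case True
  then show ?thesis using no_root_of_unity by (simp add: power_int_def)
next
  case False
  then have "q ^ nat (-z) \<noteq> 1" using no_root_of_unity z by simp
  then show ?thesis using False z by (simp add: power_int_def power_inverse)
qed

theorem corollary3p3:
  fixes n :: nat and m m' :: int and q :: complex
  assumes "n \<ge> 2" and "m' \<noteq> 0"
    and "gcd (int n) m = 1" and "gcd (int n) (m + m') = 1"
    and "q \<noteq> 0" and "\<forall>k::nat. k > 0 \<longrightarrow> q ^ k \<noteq> 1"
  shows "alexander_torus n (m + m') q
         = 1 / (q_int n q * (1 - q powi m')) * inverse (burau_zeta n (burau_torus n m q) (q powi m'))"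
proof -
  note n = assms(1) and no_root_of_unity = assms(6)
  define s where "s = q powi m'"
  define t where "t = q powi (m + m')"
  have "m + m' \<noteq> 0" using assms(4) n by auto
  then have t: "t \<noteq> 1" unfolding t_def by (rule power_int_neq_1[OF no_root_of_unity])
  have s: "s \<noteq> 1" unfolding s_def by (rule power_int_neq_1[OF no_root_of_unity assms(2)])
  have "q \<noteq> 1" and "q ^ n \<noteq> 1" using no_root_of_unity n by auto
  have "s * q powi m = t" unfolding s_def t_def using assms(5) by (simp add: power_int_add)
  then have zeta: "inverse (burau_zeta n (burau_torus n m q) s) = (1 - t ^ n) * (1 - s) / (1 - t)"
    using det_one_minus_burau_torus[OF n assms(3)] t by (simp add: burau_zeta_def)
  have alexander: "alexander_torus n (m + m') q = (1 - q) * (1 - t ^ n) / ((1 - q ^ n) * (1 - t))"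
  proof -
    have "q powi (int n * (m + m')) = t ^ n"
      unfolding t_def by (metis mult.commute power_int_mult power_int_of_nat)
    then show ?thesis unfolding alexander_torus_def t_def by simp
  qed
  show ?thesis
    unfolding s_def[symmetric] zeta alexander q_int_def
    using \<open>q \<noteq> 1\<close> \<open>q ^ n \<noteq> 1\<close> s t by (simp add: divide_simps)
qed

end
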